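(* Let $(E,C)$ be a separated graph with $E^0$ and $E^1$ countable, let $S\subseteq C_{fin}$ and let $K$ be a field. In the algebra $L_K(E,C,S)$ the following hold: 1. $e\neq 0$ for each $e\in E^1$; 2. $v\neq 0$ for each $v\in E^0$; 3. $e^*f\neq 0$ for each $e\in X$, $f\in Y$, where $X,Y\in C_v$ with $X\neq Y$; 4. for each finite set $X\in C_v\setminus S$, $\sum_{e\in X}ee^*v=\sum_{e\in X}ee^*=v\sum_{e\in X}ee^*$, but $\sum_{e\in X}ee^*\neq v$; 5. for finite sets $X,Y\in C\setminus S$ with $X\neq Y$, $\sum_{e\in X}ee^*\neq\sum_{f\in Y}ff^*$.
   Context: A separated graph is a pair $(E,C)$ where $E=(E^0,E^1,r,s)$ is a directed graph and $C=\bigcup_{v\in E^0}C_v$, where for each non-sink $v$, $C_v$ is a partition of $s^{-1}(v)$ into pairwise disjoint nonempty sets; $C_{fin}$ is the set of finite $Y\in C$. For $S\subseteq C_{fin}$ and a field $K$, the Cohn-Leavitt algebra $L_K(E,C,S)$ is the universal $K$-algebra generated by pairwise orthogonal idempotents $\{v:v\in E^0\}$ and elements $\{e,e^*:e\in E^1\}$ subject to: $s(e)e=er(e)=e$; $r(e)e^*=e^*s(e)=e^*$; $e^*f=\delta_{e,f}r(e)$ for $e,f\in Y$, $Y\in C$; $v=\sum_{e\in X}ee^*$ for every $X\in S\cap C_v$, $v$ non-sink. *)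

theory Defs
  imports Main "HOL-Library.Countable_Set"
begin

definition separated_graph ::
  "'v set \<Rightarrow> 'e set \<Rightarrow> ('e \<Rightarrow> 'v) \<Rightarrow> ('e \<Rightarrow> 'v) \<Rightarrow> 'e set set \<Rightarrow> bool" where
  "separated_graph V Ed r s C \<longleftrightarrow>
     (\<forall>e\<in>Ed. s e \<in> V \<and> r e \<in> V) \<and>
     (\<forall>X\<in>C. X \<noteq> {} \<and> X \<subseteq> Ed \<and> (\<forall>e\<in>X. \<forall>f\<in>X. s e = s f)) \<and>
     (\<forall>e\<in>Ed. \<exists>!X. X \<in> C \<and> e \<in> X)"

definition Cv :: "('e \<Rightarrow> 'v) \<Rightarrow> 'e set set \<Rightarrow> 'v \<Rightarrow> 'e set set" where
  "Cv s C v = {X \<in> C. \<forall>e\<in>X. s e = v}"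

definition Cfin :: "'e set set \<Rightarrow> 'e set set" where
  "Cfin C = {X \<in> C. finite X}"

datatype ('v,'e) gen = GV 'v | GE 'e | GS 'e  (* vertex v, edge e, ghost edge e* *)

text \<open>Elements of the free K-algebra: finitely supported functions from words to K.\<close>
type_synonym ('v,'e,'k) fpoly = "('v,'e) gen list \<Rightarrow> 'k"

definition mon :: "('v,'e) gen list \<Rightarrow> ('v,'e,'k::field) fpoly" where
  "mon w = (\<lambda>u. if u = w then 1 else 0)"

definition padd :: "('v,'e,'k::field) fpoly \<Rightarrow> ('v,'e,'k) fpoly \<Rightarrow> ('v,'e,'k) fpoly" where
  "padd p q = (\<lambda>u. p u + q u)"

definition psub :: "('v,'e,'k::field) fpoly \<Rightarrow> ('v,'e,'k) fpoly \<Rightarrow> ('v,'e,'k) fpoly" where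
  "psub p q = (\<lambda>u. p u - q u)"

definition psmult :: "'k \<Rightarrow> ('v,'e,'k::field) fpoly \<Rightarrow> ('v,'e,'k) fpoly" where
  "psmult c p = (\<lambda>u. c * p u)"

definition pzero :: "('v,'e,'k::field) fpoly" where
  "pzero = (\<lambda>u. 0)"

definition pmul :: "('v,'e,'k::field) fpoly \<Rightarrow> ('v,'e,'k) fpoly \<Rightarrow> ('v,'e,'k) fpoly" where
  "pmul p q = (\<lambda>u. \<Sum>i\<le>length u. p (take i u) * q (drop i u))"

definition psum :: "'a set \<Rightarrow> ('a \<Rightarrow> ('v,'e,'k::field) fpoly) \<Rightarrow> ('v,'e,'k) fpoly" where
  "psum A f = (\<lambda>u. \<Sum>a\<in>A. f a u)"

definition valid_gen :: "'v set \<Rightarrow> 'e set \<Rightarrow> ('v,'e) gen \<Rightarrow> bool" where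
  "valid_gen V Ed g = (case g of GV v \<Rightarrow> v \<in> V | GE e \<Rightarrow> e \<in> Ed | GS e \<Rightarrow> e \<in> Ed)"

inductive_set gen_ideal :: "'v set \<Rightarrow> 'e set \<Rightarrow> ('v,'e,'k::field) fpoly set \<Rightarrow> ('v,'e,'k) fpoly set"
  for V Ed R where
  base: "p \<in> R \<Longrightarrow> p \<in> gen_ideal V Ed R"
| zero: "pzero \<in> gen_ideal V Ed R"
| add: "p \<in> gen_ideal V Ed R \<Longrightarrow> q \<in> gen_ideal V Ed R \<Longrightarrow> padd p q \<in> gen_ideal V Ed R"
| smult: "p \<in> gen_ideal V Ed R \<Longrightarrow> psmult c p \<in> gen_ideal V Ed R"
| mult: "p \<in> gen_ideal V Ed R \<Longrightarrow> list_all (valid_gen V Ed) a \<Longrightarrow> list_all (valid_gen V Ed) b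
         \<Longrightarrow> pmul (mon a) (pmul p (mon b)) \<in> gen_ideal V Ed R"

text \<open>Each relation lhs = rhs is encoded as lhs - rhs.\<close>
definition CL_relations ::
  "'v set \<Rightarrow> 'e set \<Rightarrow> ('e \<Rightarrow> 'v) \<Rightarrow> ('e \<Rightarrow> 'v) \<Rightarrow> 'e set set \<Rightarrow> 'e set set
   \<Rightarrow> ('v,'e,'k::field) fpoly set" where
  "CL_relations V Ed r s C S =
     {psub (mon [GV v, GV w]) (if v = w then mon [GV v] else pzero) | v w. v \<in> V \<and> w \<in> V}
   \<union> {psub (mon [GV (s e), GE e]) (mon [GE e]) | e. e \<in> Ed}
   \<union> {psub (mon [GE e, GV (r e)]) (mon [GE e]) | e. e \<in> Ed}
   \<union> {psub (mon [GV (r e), GS e]) (mon [GS e]) | e. e \<in> Ed}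
   \<union> {psub (mon [GS e, GV (s e)]) (mon [GS e]) | e. e \<in> Ed}
   \<union> {psub (mon [GS e, GE f]) (if e = f then mon [GV (r e)] else pzero) | e f Y.
        Y \<in> C \<and> e \<in> Y \<and> f \<in> Y}
   \<union> {psub (mon [GV v]) (psum X (\<lambda>e. mon [GE e, GS e])) | v X.
        v \<in> V \<and> X \<in> S \<and> X \<in> Cv s C v}"

text \<open>The ideal I with L_K(E,C,S) = (free algebra)/I. An element p of the free algebra
is zero in L_K(E,C,S) iff p is in I; p = q in L_K(E,C,S) iff p - q is in I.\<close>
definition CL_ideal ::
  "'v set \<Rightarrow> 'e set \<Rightarrow> ('e \<Rightarrow> 'v) \<Rightarrow> ('e \<Rightarrow> 'v) \<Rightarrow> 'e set set \<Rightarrow> 'e set set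
   \<Rightarrow> ('v,'e,'k::field) fpoly set" where
  "CL_ideal V Ed r s C S = gen_ideal V Ed (CL_relations V Ed r s C S)"

definition CL_eq ::
  "'v set \<Rightarrow> 'e set \<Rightarrow> ('e \<Rightarrow> 'v) \<Rightarrow> ('e \<Rightarrow> 'v) \<Rightarrow> 'e set set \<Rightarrow> 'e set set
   \<Rightarrow> ('v,'e,'k::field) fpoly \<Rightarrow> ('v,'e,'k) fpoly \<Rightarrow> bool" where
  "CL_eq V Ed r s C S p q \<longleftrightarrow> psub p q \<in> CL_ideal V Ed r s C S"

definition eestar :: "'e set \<Rightarrow> ('v,'e,'k::field) fpoly" where
  "eestar X = psum X (\<lambda>e. mon [GE e, GS e])"

end

theory Submission
  imports Defs "HOL-Combinatorics.Transposition"
begin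

text \<open>
All five statements are witnessed by representations of \<open>L\<^sub>K(E,C,S)\<close> by partial
injections of \<open>V \<times> \<nat>\<close>. Choose for every \<open>Z \<in> C\<close> an injection \<open>\<phi>\<^sub>Z : Z \<times> \<nat> \<rightarrow> \<nat>\<close>
that is bijective whenever \<open>Z \<in> S\<close>. Let \<open>v\<close> restrict to \<open>{v} \<times> \<nat>\<close>, let the edge \<open>e \<in> Z\<close>
send \<open>(r e, n)\<close> to \<open>(s e, \<phi>\<^sub>Z(e,n))\<close>, and let \<open>e\<^sup>*\<close> be its partial inverse. Then \<open>e e\<^sup>*\<close>
projects \<open>{s e} \<times> \<nat>\<close> onto \<open>{s e} \<times> \<phi>\<^sub>Z({e} \<times> \<nat>)\<close>, and all Cohn-Leavitt relations hold:
the relation for \<open>X \<in> S\<close> precisely because \<open>\<phi>\<^sub>X\<close> is onto. Hence every matrix coefficient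
of an element of the ideal vanishes. Letting \<open>\<phi>\<^sub>Z\<close> send a chosen \<open>(e,0)\<close> to \<open>0\<close>, or miss
\<open>0\<close> altogether when \<open>Z \<notin> S\<close>, makes a suitable coefficient of \<open>p - q\<close> non-zero in each case.
\<close>

definition supp :: "('v,'e,'k::field) fpoly \<Rightarrow> ('v,'e) gen list set" where
  "supp p = {w. p w \<noteq> 0}"

lemma supp_mon [simp]: "supp (mon w :: ('v,'e,'k::field) fpoly) = {w}"
  by (auto simp: supp_def mon_def)

lemma supp_pzero [simp]: "supp (pzero :: ('v,'e,'k::field) fpoly) = {}"
  by (simp add: supp_def pzero_def)

lemma supp_padd: "supp (padd p q) \<subseteq> supp p \<union> supp q"
  by (auto simp: supp_def padd_def)

lemma supp_psub: "supp (psub p q) \<subseteq> supp p \<union> supp q"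
  by (auto simp: supp_def psub_def)

lemma supp_psmult: "supp (psmult c p) \<subseteq> supp p"
  by (auto simp: supp_def psmult_def)

lemma supp_psum: "supp (psum X f) \<subseteq> (\<Union>x\<in>X. supp (f x))"
proof
  fix u assume "u \<in> supp (psum X f)"
  then have "(\<Sum>x\<in>X. f x u) \<noteq> 0" by (simp add: supp_def psum_def)
  then obtain x where "x \<in> X" "f x u \<noteq> 0" by (meson sum.neutral)
  then show "u \<in> (\<Union>x\<in>X. supp (f x))" by (auto simp: supp_def)
qed

lemma finite_supp_psum:
  "finite X \<Longrightarrow> (\<And>a. a \<in> X \<Longrightarrow> finite (supp (f a))) \<Longrightarrow> finite (supp (psum X f))"
  by (rule finite_subset[OF supp_psum]) auto

lemma finite_supp_eestar: "finite X \<Longrightarrow> finite (supp (eestar X :: ('v,'e,'k::field) fpoly))"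
  unfolding eestar_def by (rule finite_supp_psum) auto

lemma psum_cong: "(\<And>x. x \<in> X \<Longrightarrow> f x = g x) \<Longrightarrow> psum X f = psum X g"
  by (simp add: psum_def fun_eq_iff)

lemma psum_psub: "psum X (\<lambda>x. psub (f x) (g x)) = psub (psum X f) (psum X g)"
  by (simp add: psum_def psub_def fun_eq_iff sum_subtractf)

lemma pmul_mon_left:
  "pmul (mon a) q u =
     (if length a \<le> length u \<and> take (length a) u = a then q (drop (length a) u) else 0)"
proof -
  have "pmul (mon a) q u = (\<Sum>i\<le>length u. if i = length a then
      (if take (length a) u = a then q (drop (length a) u) else 0) else 0)"
    unfolding pmul_def by (rule sum.cong) (auto simp: mon_def)
  then show ?thesis by (simp add: sum.delta)
qed

lemma pmul_mon_right:
  "pmul q (mon b) u =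
     (if length b \<le> length u \<and> drop (length u - length b) u = b
      then q (take (length u - length b) u) else 0)"
proof -
  have "pmul q (mon b) u = (\<Sum>i\<le>length u. if i = length u - length b then
      (if length b \<le> length u \<and> drop (length u - length b) u = b
       then q (take (length u - length b) u) else 0) else 0)"
    unfolding pmul_def by (rule sum.cong) (auto simp: mon_def)
  then show ?thesis by (simp add: sum.delta)
qed

lemma pmul_mon_mon: "pmul (mon a) (mon b :: ('v,'e,'k::field) fpoly) = mon (a @ b)"
proof
  fix u
  have "length a \<le> length u \<and> take (length a) u = a \<and> drop (length a) u = b \<longleftrightarrow> u = a @ b"
    by (metis append_eq_conv_conj le_iff_add length_append)
  then show "pmul (mon a) (mon b :: ('v,'e,'k) fpoly) u = mon (a @ b) u"
    unfolding pmul_mon_left by (simp add: mon_def) blast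
qed

lemma pmul_mon_Nil_left: "pmul (mon []) q = q"
  by (rule ext) (simp add: pmul_mon_left)

lemma pmul_mon_Nil_right: "pmul q (mon []) = q"
  by (rule ext) (simp add: pmul_mon_right)

lemma pmul_mon_left_psub: "pmul (mon a) (psub p q) = psub (pmul (mon a) p) (pmul (mon a) q)"
  by (rule ext) (simp add: pmul_mon_left psub_def)

lemma pmul_mon_right_psub: "pmul (psub p q) (mon a) = psub (pmul p (mon a)) (pmul q (mon a))"
  by (rule ext) (simp add: pmul_mon_right psub_def)

lemma pmul_mon_left_psum: "pmul (mon a) (psum X f) = psum X (\<lambda>x. pmul (mon a) (f x))"
  by (rule ext) (auto simp: pmul_mon_left psum_def)

lemma pmul_mon_right_psum: "pmul (psum X f) (mon a) = psum X (\<lambda>x. pmul (f x) (mon a))"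
  by (rule ext) (auto simp: pmul_mon_right psum_def)

lemma pmul_mon_pmul_mon_append: "pmul (mon a) (pmul p (mon b)) (a @ w @ b) = p w"
  by (simp add: pmul_mon_left pmul_mon_right)

lemma supp_pmul_mon_pmul_mon:
  "supp (pmul (mon a) (pmul p (mon b))) \<subseteq> (\<lambda>w. a @ w @ b) ` supp p"
proof
  fix u assume "u \<in> supp (pmul (mon a) (pmul p (mon b)))"
  then have nz: "pmul (mon a) (pmul p (mon b)) u \<noteq> 0" by (simp add: supp_def)
  define u' where "u' = drop (length a) u"
  define w where "w = take (length u' - length b) u'"
  from nz have "take (length a) u = a" and nz': "pmul p (mon b) u' \<noteq> 0"
    by (auto simp: pmul_mon_left u'_def split: if_splits)
  moreover from nz' have "drop (length u' - length b) u' = b" and "p w \<noteq> 0"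
    by (auto simp: pmul_mon_right w_def split: if_splits)
  ultimately have "u = a @ w @ b" and "w \<in> supp p"
    by (metis append_take_drop_id u'_def w_def, simp add: supp_def)
  then show "u \<in> (\<lambda>w. a @ w @ b) ` supp p" by blast
qed

lemma psum_in_gen_ideal:
  assumes "finite X" "\<And>x. x \<in> X \<Longrightarrow> f x \<in> gen_ideal V Ed R"
  shows "psum X f \<in> gen_ideal V Ed R"
  using assms
proof (induction X rule: finite_induct)
  case empty
  have "psum {} f = pzero" by (simp add: psum_def pzero_def)
  then show ?case using gen_ideal.zero by metis
next
  case (insert x X)
  have "psum (insert x X) f = padd (f x) (psum X f)"
    using insert.hyps by (simp add: psum_def padd_def fun_eq_iff)
  then show ?case using insert by (simp add: gen_ideal.add)
qed

lemma gen_ideal_mult_left: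
  "p \<in> gen_ideal V Ed R \<Longrightarrow> list_all (valid_gen V Ed) a \<Longrightarrow> pmul (mon a) p \<in> gen_ideal V Ed R"
  using gen_ideal.mult[of p V Ed R a "[]"] by (simp add: pmul_mon_Nil_right)

lemma gen_ideal_mult_right:
  "p \<in> gen_ideal V Ed R \<Longrightarrow> list_all (valid_gen V Ed) b \<Longrightarrow> pmul p (mon b) \<in> gen_ideal V Ed R"
  using gen_ideal.mult[of p V Ed R "[]" b] by (simp add: pmul_mon_Nil_left)

lemma separated_graph_classD:
  assumes "separated_graph V Ed r s C" "X \<in> C"
  shows "X \<noteq> {}" "X \<subseteq> Ed" "\<And>e f. e \<in> X \<Longrightarrow> f \<in> X \<Longrightarrow> s e = s f"
proof -
  have "\<forall>X\<in>C. X \<noteq> {} \<and> X \<subseteq> Ed \<and> (\<forall>e\<in>X. \<forall>f\<in>X. s e = s f)"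
    using assms(1) unfolding separated_graph_def by (elim conjE)
  then show "X \<noteq> {}" "X \<subseteq> Ed" "\<And>e f. e \<in> X \<Longrightarrow> f \<in> X \<Longrightarrow> s e = s f"
    using assms(2) by blast+
qed

lemma separated_graph_unique_class:
  "separated_graph V Ed r s C \<Longrightarrow> e \<in> Ed \<Longrightarrow> \<exists>!X. X \<in> C \<and> e \<in> X"
  unfolding separated_graph_def by (elim conjE) (rule bspec)

lemma separated_graph_class_Cv:
  "separated_graph V Ed r s C \<Longrightarrow> X \<in> C \<Longrightarrow> e \<in> X \<Longrightarrow> X \<in> Cv s C (s e)"
  unfolding Cv_def by (blast dest: separated_graph_classD(3))

lemma separated_graph_class_countable:
  "separated_graph V Ed r s C \<Longrightarrow> countable Ed \<Longrightarrow> Z \<in> C \<Longrightarrow> countable Z"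
  by (meson countable_subset separated_graph_classD(2))

subsection \<open>Representations by partial injections\<close>

locale CL_rep =
  fixes V :: "'v set" and Ed :: "'e set" and r s :: "'e \<Rightarrow> 'v" and C S :: "'e set set"
    and \<phi> :: "'e set \<Rightarrow> 'e \<times> nat \<Rightarrow> nat"
  assumes sg: "separated_graph V Ed r s C"
    and S_Cfin: "S \<subseteq> Cfin C"
    and inj_phi: "Z \<in> C \<Longrightarrow> inj_on (\<phi> Z) (Z \<times> UNIV)"
    and surj_phi: "Z \<in> S \<Longrightarrow> \<phi> Z ` (Z \<times> UNIV) = UNIV"
begin

definition cls :: "'e \<Rightarrow> 'e set" where
  "cls e = (THE X. X \<in> C \<and> e \<in> X)"

lemma cls_eq: assumes "Y \<in> C" "e \<in> Y" shows "cls e = Y"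
proof -
  have "e \<in> Ed" using separated_graph_classD(2)[OF sg assms(1)] assms(2) by blast
  then have "\<exists>!X. X \<in> C \<and> e \<in> X" by (rule separated_graph_unique_class[OF sg])
  then show ?thesis unfolding cls_def by (rule the1_equality) (simp add: assms)
qed

lemma cls_mem: assumes "e \<in> Ed" shows "cls e \<in> C" "e \<in> cls e"
proof -
  obtain X where "X \<in> C" "e \<in> X" using separated_graph_unique_class[OF sg assms] by blast
  then show "cls e \<in> C" "e \<in> cls e" using cls_eq by auto
qed

lemma phi_cls_eqD:
  assumes "e \<in> Ed" "e' \<in> cls e" "\<phi> (cls e) (e', m) = \<phi> (cls e) (e, n)"
  shows "e' = e \<and> m = n"
  using inj_onD[OF inj_phi[OF cls_mem(1)[OF assms(1)]] assms(3)] cls_mem(2)[OF assms(1)] assms(2)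
  by simp

lemma the_phi_cls: "e \<in> Ed \<Longrightarrow> (THE n. \<phi> (cls e) (e, n) = \<phi> (cls e) (e, m)) = m"
  by (rule the_equality) (auto dest: phi_cls_eqD[OF _ cls_mem(2)])

text \<open>Words act from right to left, like products of matrices on column vectors.\<close>

definition act :: "('v,'e) gen \<Rightarrow> 'v \<times> nat \<Rightarrow> ('v \<times> nat) option" where
  "act g x = (case g of
      GV v \<Rightarrow> if fst x = v then Some x else None
    | GE e \<Rightarrow> if e \<in> Ed \<and> fst x = r e then Some (s e, \<phi> (cls e) (e, snd x)) else None
    | GS e \<Rightarrow> if e \<in> Ed \<and> fst x = s e \<and> (\<exists>n. \<phi> (cls e) (e, n) = snd x)
              then Some (r e, THE n. \<phi> (cls e) (e, n) = snd x) else None)"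

lemma act_GV: "act (GV v) x = (if fst x = v then Some x else None)"
  by (simp add: act_def)

lemma act_GE:
  "act (GE e) x = (if e \<in> Ed \<and> fst x = r e then Some (s e, \<phi> (cls e) (e, snd x)) else None)"
  by (simp add: act_def)

lemma act_GS:
  "act (GS e) x = (if e \<in> Ed \<and> fst x = s e \<and> (\<exists>n. \<phi> (cls e) (e, n) = snd x)
                   then Some (r e, THE n. \<phi> (cls e) (e, n) = snd x) else None)"
  by (simp add: act_def)

lemma act_GS_phi:
  "e \<in> Ed \<Longrightarrow> act (GS e) (w, \<phi> (cls e) (e, n)) = (if w = s e then Some (r e, n) else None)"
  by (auto simp: act_GS the_phi_cls)

lemma act_inj: assumes "act g x = Some z" "act g y = Some z" shows "x = y"
proof (cases g)
  case (GV v) then show ?thesis using assms by (auto simp: act_GV split: if_splits)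
next
  case (GE e)
  then have "e \<in> Ed" "fst x = r e" "fst y = r e" "\<phi> (cls e) (e, snd x) = \<phi> (cls e) (e, snd y)"
    using assms by (auto simp: act_GE split: if_splits)
  then show ?thesis using phi_cls_eqD[OF _ cls_mem(2)] by (metis prod.expand)
next
  case (GS e)
  from assms GS obtain nx ny where "e \<in> Ed" "fst x = s e" "fst y = s e"
    "\<phi> (cls e) (e, nx) = snd x" "\<phi> (cls e) (e, ny) = snd y"
    "(THE n. \<phi> (cls e) (e, n) = snd x) = (THE n. \<phi> (cls e) (e, n) = snd y)"
    by (auto simp: act_GS split: if_splits)
  then show ?thesis by (metis prod.expand the_phi_cls)
qed

primrec wact :: "('v,'e) gen list \<Rightarrow> 'v \<times> nat \<Rightarrow> ('v \<times> nat) option" where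
  "wact [] x = Some x"
| "wact (g # w) x = Option.bind (wact w x) (act g)"

lemma wact_append: "wact (a @ b) x = Option.bind (wact b x) (wact a)"
  by (induction a) auto

lemma wact_inj: "wact w x = Some z \<Longrightarrow> wact w y = Some z \<Longrightarrow> x = y"
proof (induction w arbitrary: z)
  case (Cons g w)
  then obtain x' y' where "wact w x = Some x'" "act g x' = Some z"
    "wact w y = Some y'" "act g y' = Some z"
    by (auto split: Option.bind_splits)
  then show ?case using Cons.IH act_inj by metis
qed simp

lemma wact_edge_ghost:
  assumes "e \<in> Ed"
  shows "wact [GE e, GS e] x =
           (if fst x = s e \<and> (\<exists>n. \<phi> (cls e) (e, n) = snd x) then Some x else None)"
proof (cases "fst x = s e \<and> (\<exists>n. \<phi> (cls e) (e, n) = snd x)")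
  case True
  then obtain n where "x = (s e, \<phi> (cls e) (e, n))" by (metis prod.collapse)
  then show ?thesis using assms by (auto simp: act_GS_phi act_GE)
qed (use assms in \<open>auto simp: act_GS\<close>)

definition rep_entry :: "('v,'e,'k::field) fpoly \<Rightarrow> 'v \<times> nat \<Rightarrow> 'v \<times> nat \<Rightarrow> 'k" where
  "rep_entry p x y = (\<Sum>w\<in>supp p. if wact w x = Some y then p w else 0)"

lemma rep_entry_superset:
  "finite A \<Longrightarrow> supp p \<subseteq> A \<Longrightarrow> rep_entry p x y = (\<Sum>w\<in>A. if wact w x = Some y then p w else 0)"
  unfolding rep_entry_def by (rule sum.mono_neutral_left) (auto simp: supp_def)

lemma rep_entry_mon:
  "rep_entry (mon w :: ('v,'e,'k::field) fpoly) x y = (if wact w x = Some y then 1 else 0)"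
  unfolding rep_entry_def supp_mon by (simp add: mon_def)

lemma rep_entry_pzero: "rep_entry (pzero :: ('v,'e,'k::field) fpoly) x y = 0"
  by (simp add: rep_entry_def)

lemma rep_entry_padd:
  assumes "finite (supp p)" "finite (supp q)"
  shows "rep_entry (padd p q) x y = rep_entry p x y + rep_entry q x y"
proof -
  let ?A = "supp p \<union> supp q"
  have "rep_entry (padd p q) x y = (\<Sum>w\<in>?A. if wact w x = Some y then padd p q w else 0)"
    using assms supp_padd by (intro rep_entry_superset) auto
  also have "\<dots> = (\<Sum>w\<in>?A. (if wact w x = Some y then p w else 0) + (if wact w x = Some y then q w else 0))"
    by (rule sum.cong) (auto simp: padd_def)
  also have "\<dots> = rep_entry p x y + rep_entry q x y"
    using assms by (simp add: sum.distrib rep_entry_superset[of ?A])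
  finally show ?thesis .
qed

lemma rep_entry_psub:
  assumes "finite (supp p)" "finite (supp q)"
  shows "rep_entry (psub p q) x y = rep_entry p x y - rep_entry q x y"
proof -
  let ?A = "supp p \<union> supp q"
  have "rep_entry (psub p q) x y = (\<Sum>w\<in>?A. if wact w x = Some y then psub p q w else 0)"
    using assms supp_psub by (intro rep_entry_superset) auto
  also have "\<dots> = (\<Sum>w\<in>?A. (if wact w x = Some y then p w else 0) - (if wact w x = Some y then q w else 0))"
    by (rule sum.cong) (auto simp: psub_def)
  also have "\<dots> = rep_entry p x y - rep_entry q x y"
    using assms by (simp add: sum_subtractf rep_entry_superset[of ?A])
  finally show ?thesis .
qed

lemma rep_entry_psmult:
  assumes "finite (supp p)"
  shows "rep_entry (psmult c p) x y = c * rep_entry p x y"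
proof -
  have "rep_entry (psmult c p) x y = (\<Sum>w\<in>supp p. if wact w x = Some y then psmult c p w else 0)"
    using assms supp_psmult by (intro rep_entry_superset) auto
  also have "\<dots> = c * rep_entry p x y"
    unfolding rep_entry_def sum_distrib_left by (rule sum.cong) (auto simp: psmult_def)
  finally show ?thesis .
qed

lemma rep_entry_psum:
  assumes "finite X" "\<And>a. a \<in> X \<Longrightarrow> finite (supp (f a))"
  shows "rep_entry (psum X f) x y = (\<Sum>a\<in>X. rep_entry (f a) x y)"
proof -
  let ?A = "\<Union>a\<in>X. supp (f a)"
  have fA: "finite ?A" using assms by auto
  have "rep_entry (psum X f) x y = (\<Sum>w\<in>?A. if wact w x = Some y then psum X f w else 0)"
    using fA supp_psum by (intro rep_entry_superset) auto
  also have "\<dots> = (\<Sum>w\<in>?A. \<Sum>a\<in>X. if wact w x = Some y then f a w else 0)"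
    by (rule sum.cong) (auto simp: psum_def)
  also have "\<dots> = (\<Sum>a\<in>X. \<Sum>w\<in>?A. if wact w x = Some y then f a w else 0)"
    by (rule sum.swap)
  also have "\<dots> = (\<Sum>a\<in>X. rep_entry (f a) x y)"
    by (rule sum.cong) (use fA in \<open>auto intro!: rep_entry_superset[symmetric]\<close>)
  finally show ?thesis .
qed

lemma rep_entry_mult_mon:
  assumes "finite (supp p)"
  shows "rep_entry (pmul (mon a) (pmul p (mon b))) x y =
           (\<Sum>w\<in>supp p. if wact (a @ w @ b) x = Some y then p w else 0)"
proof -
  let ?h = "\<lambda>w. a @ w @ b"
  have "inj_on ?h (supp p)" by (auto simp: inj_on_def)
  moreover have "rep_entry (pmul (mon a) (pmul p (mon b))) x y
      = (\<Sum>u\<in>?h ` supp p. if wact u x = Some y then pmul (mon a) (pmul p (mon b)) u else 0)"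
    by (intro rep_entry_superset finite_imageI assms supp_pmul_mon_pmul_mon)
  ultimately show ?thesis by (simp add: sum.reindex) (simp only: pmul_mon_pmul_mon_append)
qed

lemma wact_append3_iff:
  assumes "wact b x = Some z" "wact a t = Some y"
  shows "wact (a @ w @ b) x = Some y \<longleftrightarrow> wact w z = Some t"
proof
  assume "wact (a @ w @ b) x = Some y"
  then obtain t' where "wact w z = Some t'" "wact a t' = Some y"
    using assms(1) by (auto simp: wact_append split: Option.bind_splits)
  then show "wact w z = Some t" using wact_inj[OF _ assms(2)] by metis
qed (use assms in \<open>simp add: wact_append\<close>)

definition rep_vanishes :: "('v,'e,'k::field) fpoly \<Rightarrow> bool" where
  "rep_vanishes p \<longleftrightarrow> finite (supp p) \<and> (\<forall>x y. rep_entry p x y = 0)"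

text \<open>Because every word acts injectively, an entry of \<open>a p b\<close> is an entry of \<open>p\<close> or \<open>0\<close>.\<close>

lemma rep_vanishes_mult_mon:
  assumes "rep_vanishes p" shows "rep_vanishes (pmul (mon a) (pmul p (mon b)))"
proof -
  have fp: "finite (supp p)" and zero: "\<And>x y. rep_entry p x y = 0"
    using assms by (auto simp: rep_vanishes_def)
  have "rep_entry (pmul (mon a) (pmul p (mon b))) x y = 0" for x y
  proof (cases "\<exists>z t. wact b x = Some z \<and> wact a t = Some y")
    case True
    then obtain z t where "wact b x = Some z" "wact a t = Some y" by blast
    then have "rep_entry (pmul (mon a) (pmul p (mon b))) x y = rep_entry p z t"
      unfolding rep_entry_mult_mon[OF fp] by (simp add: wact_append3_iff rep_entry_def)
    then show ?thesis using zero by simp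
  next
    case False
    then have "wact (a @ w @ b) x \<noteq> Some y" for w
      by (auto simp: wact_append split: Option.bind_splits)
    then show ?thesis by (simp add: rep_entry_mult_mon[OF fp])
  qed
  moreover have "finite (supp (pmul (mon a) (pmul p (mon b))))"
    using fp by (rule finite_subset[OF supp_pmul_mon_pmul_mon finite_imageI])
  ultimately show ?thesis by (simp add: rep_vanishes_def)
qed

lemma rep_vanishes_psub:
  assumes "finite (supp p)" "finite (supp q)" "\<And>x y. rep_entry p x y = rep_entry q x y"
  shows "rep_vanishes (psub p q)"
proof -
  have "finite (supp (psub p q))" using assms(1,2) by (meson finite_UnI finite_subset supp_psub)
  then show ?thesis using assms by (simp add: rep_vanishes_def rep_entry_psub)
qed

lemma rep_vanishes_same_action:
  "(\<And>x. wact u x = wact u' x) \<Longrightarrow> rep_vanishes (psub (mon u) (mon u' :: ('v,'e,'k::field) fpoly))"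
  by (rule rep_vanishes_psub) (auto simp: rep_entry_mon)

lemma rep_vanishes_no_action:
  "(\<And>x. wact u x = None) \<Longrightarrow> rep_vanishes (psub (mon u) (pzero :: ('v,'e,'k::field) fpoly))"
  by (rule rep_vanishes_psub) (auto simp: rep_entry_mon rep_entry_pzero)

lemma rep_vanishes_incidence_relations:
  "rep_vanishes (psub (mon [GV v, GV w]) (if v = w then mon [GV v] else (pzero :: ('v,'e,'k::field) fpoly)))"
  "rep_vanishes (psub (mon [GV (s e), GE e]) (mon [GE e] :: ('v,'e,'k) fpoly))"
  "rep_vanishes (psub (mon [GE e, GV (r e)]) (mon [GE e] :: ('v,'e,'k) fpoly))"
  "rep_vanishes (psub (mon [GV (r e), GS e]) (mon [GS e] :: ('v,'e,'k) fpoly))"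
  "rep_vanishes (psub (mon [GS e, GV (s e)]) (mon [GS e] :: ('v,'e,'k) fpoly))"
  by (auto intro!: rep_vanishes_same_action rep_vanishes_no_action simp: act_GV act_GE act_GS)

lemma rep_vanishes_ghost_edge_relation:
  assumes Y: "Y \<in> C" "e \<in> Y" "f \<in> Y"
  shows "rep_vanishes (psub (mon [GS e, GE f])
           (if e = f then mon [GV (r e)] else (pzero :: ('v,'e,'k::field) fpoly)))"
proof -
  have eE: "e \<in> Ed" and fE: "f \<in> Ed" using Y separated_graph_classD(2)[OF sg] by auto
  have cls_e: "cls e = Y" and cls_f: "cls f = Y" using Y cls_eq by auto
  show ?thesis
  proof (cases "e = f")
    case True
    have "wact [GS e, GE e] x = wact [GV (r e)] x" for x
      using eE by (cases x) (simp add: act_GE act_GV act_GS_phi)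
    then show ?thesis using True by (simp add: rep_vanishes_same_action)
  next
    case False
    have "wact [GS e, GE f] x = None" for x
    proof -
      have "\<phi> Y (e, n) \<noteq> \<phi> Y (f, snd x)" for n
        using phi_cls_eqD[OF eE, of f "snd x" n] cls_e Y(3) False by auto
      then show ?thesis using fE by (simp add: act_GE act_GS cls_e cls_f)
    qed
    then show ?thesis using False by (simp add: rep_vanishes_no_action)
  qed
qed

lemma rep_entry_eestar:
  assumes X: "X \<in> Cv s C v" and fX: "finite X"
  shows "rep_entry (eestar X :: ('v,'e,'k::field) fpoly) x y =
           (if x = y \<and> fst x = v \<and> snd x \<in> \<phi> X ` (X \<times> UNIV) then 1 else 0)"
proof -
  have XC: "X \<in> C" and sX: "\<And>e. e \<in> X \<Longrightarrow> s e = v" using X by (auto simp: Cv_def)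
  have XE: "X \<subseteq> Ed" using separated_graph_classD(2)[OF sg XC] .
  have "rep_entry (mon [GE e, GS e] :: ('v,'e,'k) fpoly) x y =
          (if x = y \<and> fst x = v \<and> (\<exists>n. \<phi> X (e, n) = snd x) then 1 else 0)" if e: "e \<in> X" for e
  proof -
    have "e \<in> Ed" using e XE by blast
    then show ?thesis
      unfolding rep_entry_mon wact_edge_ghost[OF \<open>e \<in> Ed\<close>] using cls_eq[OF XC e] sX[OF e] by auto
  qed
  then have sum: "rep_entry (eestar X :: ('v,'e,'k) fpoly) x y =
      (\<Sum>e\<in>X. if x = y \<and> fst x = v \<and> (\<exists>n. \<phi> X (e, n) = snd x) then 1 else 0)"
    using fX by (simp add: eestar_def rep_entry_psum)
  show ?thesis
  proof (cases "x = y \<and> fst x = v \<and> snd x \<in> \<phi> X ` (X \<times> UNIV)")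
    case True
    then obtain e0 n0 where e0: "e0 \<in> X" "\<phi> X (e0, n0) = snd x" by auto
    have "(\<exists>n. \<phi> X (e, n) = snd x) \<longleftrightarrow> e = e0" if "e \<in> X" for e
      using inj_onD[OF inj_phi[OF XC], of "(e, _)" "(e0, n0)"] that e0 by auto
    then have "rep_entry (eestar X :: ('v,'e,'k) fpoly) x y = (\<Sum>e\<in>X. if e = e0 then 1 else 0)"
      unfolding sum using True by (intro sum.cong) auto
    also have "\<dots> = 1" using fX e0(1) by simp
    finally show ?thesis by (simp only: if_P[OF True])
  next
    case False
    then have "\<not> (x = y \<and> fst x = v \<and> (\<exists>n. \<phi> X (e, n) = snd x))" if "e \<in> X" for e
      using that by (metis SigmaI UNIV_I image_eqI)
    then have "rep_entry (eestar X :: ('v,'e,'k) fpoly) x y = 0"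
      unfolding sum by (intro sum.neutral) auto
    then show ?thesis by (simp only: if_not_P[OF False])
  qed
qed

lemma rep_vanishes_vertex_relation:
  assumes XS: "X \<in> S" and XC: "X \<in> Cv s C v"
  shows "rep_vanishes (psub (mon [GV v]) (psum X (\<lambda>e. mon [GE e, GS e]) :: ('v,'e,'k::field) fpoly))"
proof -
  have fX: "finite X" and "X \<in> C" using XS S_Cfin by (auto simp: Cfin_def)
  then have "snd x \<in> \<phi> X ` (X \<times> UNIV)" for x :: "'v \<times> nat" using surj_phi[OF XS] by simp
  then have "rep_entry (mon [GV v] :: ('v,'e,'k) fpoly) x y = rep_entry (eestar X) x y" for x y
    by (cases x) (auto simp: rep_entry_mon act_GV rep_entry_eestar[OF XC fX])
  then show ?thesis
    using fX by (intro rep_vanishes_psub) (auto simp: finite_supp_eestar eestar_def[symmetric])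
qed

lemma rep_vanishes_CL_relation: "p \<in> CL_relations V Ed r s C S \<Longrightarrow> rep_vanishes p"
  unfolding CL_relations_def
  by (auto intro: rep_vanishes_incidence_relations rep_vanishes_ghost_edge_relation
      rep_vanishes_vertex_relation)

lemma rep_vanishes_CL_ideal: "p \<in> CL_ideal V Ed r s C S \<Longrightarrow> rep_vanishes p"
  unfolding CL_ideal_def
proof (induction rule: gen_ideal.induct)
  case (base p) then show ?case by (rule rep_vanishes_CL_relation)
next
  case zero show ?case by (simp add: rep_vanishes_def rep_entry_pzero)
next
  case (add p q)
  then have "finite (supp p)" "finite (supp q)" by (auto simp: rep_vanishes_def)
  moreover have "finite (supp (padd p q))"
    using calculation by (meson finite_UnI finite_subset supp_padd)
  ultimately show ?case using add.IH by (auto simp: rep_vanishes_def rep_entry_padd)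
next
  case (smult p c)
  then have "finite (supp p)" by (auto simp: rep_vanishes_def)
  moreover have "finite (supp (psmult c p))" using calculation by (rule finite_subset[OF supp_psmult])
  ultimately show ?case using smult.IH by (auto simp: rep_vanishes_def rep_entry_psmult)
next
  case (mult p a b)
  then show ?case by (simp add: rep_vanishes_mult_mon)
qed

lemma not_CL_eq_if_rep_entry_differs:
  assumes "finite (supp p)" "finite (supp q)" "rep_entry p x y \<noteq> rep_entry q x y"
  shows "\<not> CL_eq V Ed r s C S p q"
proof
  assume "CL_eq V Ed r s C S p q"
  then have "rep_entry (psub p q) x y = 0"
    using rep_vanishes_CL_ideal unfolding CL_eq_def rep_vanishes_def by blast
  then show False using rep_entry_psub[OF assms(1,2)] assms(3) by simp
qed

end

subsection \<open>Choosing the injections\<close>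

definition enum :: "'a set \<Rightarrow> 'a \<times> nat \<Rightarrow> nat" where
  "enum Z = to_nat_on (Z \<times> (UNIV :: nat set))"

lemma bij_betw_enum:
  assumes "countable Z" "Z \<noteq> {}"
  shows "bij_betw (enum Z) (Z \<times> UNIV) UNIV"
proof -
  have "countable (Z \<times> (UNIV :: nat set))" using assms(1) by simp
  moreover have "infinite (Z \<times> (UNIV :: nat set))" using assms(2) finite_cartesian_productD2 by blast
  ultimately show ?thesis unfolding enum_def by (rule to_nat_on_infinite)
qed

definition pinned_enum :: "'a set \<Rightarrow> 'a \<Rightarrow> 'a \<times> nat \<Rightarrow> nat" where
  "pinned_enum Z e = transpose (enum Z (e, 0)) 0 \<circ> enum Z"

lemma bij_betw_pinned_enum:
  "countable Z \<Longrightarrow> e \<in> Z \<Longrightarrow> bij_betw (pinned_enum Z e) (Z \<times> UNIV) UNIV"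
  unfolding pinned_enum_def by (intro bij_betw_trans[OF bij_betw_enum] bij_transpose) auto

lemma pinned_enum_pinned [simp]: "pinned_enum Z e (e, 0) = 0"
  by (simp add: pinned_enum_def)

lemma CL_rep_enum:
  assumes sg: "separated_graph V Ed r s C" and cE: "countable Ed" and S: "S \<subseteq> Cfin C"
  shows "CL_rep V Ed r s C S enum"
proof -
  have bij: "bij_betw (enum Z) (Z \<times> UNIV) UNIV" if "Z \<in> C" for Z
    using separated_graph_class_countable[OF sg cE that] separated_graph_classD(1)[OF sg that]
    by (rule bij_betw_enum)
  show ?thesis
  proof
    fix Z assume "Z \<in> C"
    then show "inj_on (enum Z) (Z \<times> UNIV)" by (rule bij_betw_imp_inj_on[OF bij])
  next
    fix Z assume "Z \<in> S"
    then have "Z \<in> C" using S by (auto simp: Cfin_def)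
    then show "enum Z ` (Z \<times> UNIV) = UNIV" by (rule bij_betw_imp_surj_on[OF bij])
  qed (fact sg S)+
qed

lemma (in CL_rep) CL_rep_fun_upd:
  assumes "inj_on \<psi> (Z \<times> UNIV)" "Z \<in> S \<Longrightarrow> \<psi> ` (Z \<times> UNIV) = UNIV"
  shows "CL_rep V Ed r s C S (\<phi>(Z := \<psi>))"
proof
  fix Z' assume "Z' \<in> C"
  then show "inj_on ((\<phi>(Z := \<psi>)) Z') (Z' \<times> UNIV)" using assms(1) inj_phi by (cases "Z' = Z") simp_all
next
  fix Z' assume "Z' \<in> S"
  then show "(\<phi>(Z := \<psi>)) Z' ` (Z' \<times> UNIV) = UNIV" using assms(2) surj_phi by (cases "Z' = Z") simp_all
qed (fact sg S_Cfin)+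

lemma (in CL_rep) CL_rep_pinned:
  assumes "countable Ed" "Z \<in> C" "e \<in> Z"
  shows "CL_rep V Ed r s C S (\<phi>(Z := pinned_enum Z e))"
proof -
  have "bij_betw (pinned_enum Z e) (Z \<times> UNIV) UNIV"
    by (rule bij_betw_pinned_enum[OF separated_graph_class_countable[OF sg assms(1,2)] assms(3)])
  then show ?thesis by (intro CL_rep_fun_upd bij_betw_imp_inj_on bij_betw_imp_surj_on)
qed

lemma (in CL_rep) CL_rep_shifted:
  assumes "countable Ed" "Z \<in> C" "Z \<notin> S"
  shows "CL_rep V Ed r s C S (\<phi>(Z := Suc \<circ> enum Z))"
proof -
  have "bij_betw (enum Z) (Z \<times> UNIV) UNIV"
    using separated_graph_class_countable[OF sg assms(1,2)] separated_graph_classD(1)[OF sg assms(2)]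
    by (rule bij_betw_enum)
  then have "inj_on (enum Z) (Z \<times> UNIV)" by (rule bij_betw_imp_inj_on)
  then have "inj_on (Suc \<circ> enum Z) (Z \<times> UNIV)" by (rule comp_inj_on) simp
  then show ?thesis by (rule CL_rep_fun_upd) (use assms(3) in blast)
qed

lemma CL_eq_eestar_vertex:
  assumes sg: "separated_graph V Ed r s C" and X: "X \<in> Cv s C v" and fX: "finite X"
  shows "CL_eq V Ed r s C S (pmul (eestar X) (mon [GV v])) (eestar X :: ('v,'e,'k::field) fpoly)"
    and "CL_eq V Ed r s C S (eestar X) (pmul (mon [GV v]) (eestar X) :: ('v,'e,'k) fpoly)"
proof -
  have sX: "\<And>e. e \<in> X \<Longrightarrow> s e = v" and XE: "X \<subseteq> Ed"
    using X separated_graph_classD(2)[OF sg] by (auto simp: Cv_def)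
  let ?I = "gen_ideal V Ed (CL_relations V Ed r s C S) :: ('v,'e,'k) fpoly set"
  have rel_ghost_source: "psub (mon [GS e, GV (s e)]) (mon [GS e]) \<in> ?I"
    and rel_source_edge: "psub (mon [GV (s e), GE e]) (mon [GE e]) \<in> ?I"
    and valid: "list_all (valid_gen V Ed) [GE e]" "list_all (valid_gen V Ed) [GS e]"
    if "e \<in> X" for e
    using that XE by (auto simp: CL_relations_def valid_gen_def intro!: gen_ideal.base)
  have "psub (pmul (eestar X) (mon [GV v])) (eestar X)
      = psum X (\<lambda>e. pmul (mon [GE e]) (psub (mon [GS e, GV (s e)]) (mon [GS e]) :: ('v,'e,'k) fpoly))"
    unfolding eestar_def pmul_mon_right_psum psum_psub[symmetric]
    by (rule psum_cong) (simp add: pmul_mon_left_psub pmul_mon_mon sX)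
  also have "\<dots> \<in> ?I"
    using fX rel_ghost_source valid by (intro psum_in_gen_ideal gen_ideal_mult_left) auto
  finally show "CL_eq V Ed r s C S (pmul (eestar X) (mon [GV v])) (eestar X :: ('v,'e,'k) fpoly)"
    unfolding CL_eq_def CL_ideal_def .
  have "psub (eestar X) (pmul (mon [GV v]) (eestar X))
      = psum X (\<lambda>e. psmult (-1) (pmul (psub (mon [GV (s e), GE e]) (mon [GE e])) (mon [GS e])
          :: ('v,'e,'k) fpoly))"
    unfolding eestar_def pmul_mon_left_psum psum_psub[symmetric]
    by (rule psum_cong) (simp add: pmul_mon_right_psub pmul_mon_mon sX, simp add: psub_def psmult_def)
  also have "\<dots> \<in> ?I"
    using fX rel_source_edge valid by (intro psum_in_gen_ideal gen_ideal.smult gen_ideal_mult_right) auto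
  finally show "CL_eq V Ed r s C S (eestar X) (pmul (mon [GV v]) (eestar X) :: ('v,'e,'k) fpoly)"
    unfolding CL_eq_def CL_ideal_def .
qed

lemma CL_edge_nonzero:
  assumes sg: "separated_graph V Ed r s C" and cE: "countable Ed" and S: "S \<subseteq> Cfin C"
    and e: "e \<in> Ed"
  shows "\<not> CL_eq V Ed r s C S (mon [GE e]) (pzero :: ('v,'e,'k::field) fpoly)"
proof -
  interpret CL_rep V Ed r s C S enum using CL_rep_enum[OF sg cE S] .
  have "wact [GE e] (r e, 0) = Some (s e, enum (cls e) (e, 0))" using e by (simp add: act_GE)
  then show ?thesis
    by (intro not_CL_eq_if_rep_entry_differs[where x = "(r e, 0)" and y = "(s e, enum (cls e) (e, 0))"])
      (simp_all add: rep_entry_mon rep_entry_pzero)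
qed

lemma CL_vertex_nonzero:
  assumes sg: "separated_graph V Ed r s C" and cE: "countable Ed" and S: "S \<subseteq> Cfin C"
  shows "\<not> CL_eq V Ed r s C S (mon [GV v]) (pzero :: ('v,'e,'k::field) fpoly)"
proof -
  interpret CL_rep V Ed r s C S enum using CL_rep_enum[OF sg cE S] .
  show ?thesis
    by (intro not_CL_eq_if_rep_entry_differs[where x = "(v, 0)" and y = "(v, 0)"])
      (simp_all add: rep_entry_mon rep_entry_pzero act_GV)
qed

lemma CL_ghost_edge_nonzero:
  assumes sg: "separated_graph V Ed r s C" and cE: "countable Ed" and S: "S \<subseteq> Cfin C"
    and X: "X \<in> Cv s C v" and Y: "Y \<in> Cv s C v" and XY: "X \<noteq> Y" and e: "e \<in> X" and f: "f \<in> Y"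
  shows "\<not> CL_eq V Ed r s C S (mon [GS e, GE f]) (pzero :: ('v,'e,'k::field) fpoly)"
proof -
  have XC: "X \<in> C" and YC: "Y \<in> C" and se: "s e = v" and sf: "s f = v"
    using X Y e f by (auto simp: Cv_def)
  define \<phi> where "\<phi> = enum(X := pinned_enum X e, Y := pinned_enum Y f)"
  interpret CL_rep V Ed r s C S \<phi>
    unfolding \<phi>_def
    by (rule CL_rep.CL_rep_pinned[OF CL_rep.CL_rep_pinned[OF CL_rep_enum[OF sg cE S]]])
      (use cE XC YC e f in auto)
  have eE: "e \<in> Ed" and fE: "f \<in> Ed" using XC YC e f separated_graph_classD(2)[OF sg] by auto
  have "cls e = X" "cls f = Y" using XC YC e f cls_eq by auto
  then have "\<phi> (cls e) (e, 0) = 0" "\<phi> (cls f) (f, 0) = 0" using XY by (simp_all add: \<phi>_def)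
  then have "wact [GS e, GE f] (r f, 0) = Some (r e, 0)"
    using act_GS_phi[OF eE, of v 0] fE se sf by (simp add: act_GE)
  then show ?thesis
    by (intro not_CL_eq_if_rep_entry_differs[where x = "(r f, 0)" and y = "(r e, 0)"])
      (simp_all add: rep_entry_mon rep_entry_pzero)
qed

lemma CL_eestar_neq_vertex:
  assumes sg: "separated_graph V Ed r s C" and cE: "countable Ed" and S: "S \<subseteq> Cfin C"
    and X: "X \<in> Cv s C v" and XS: "X \<notin> S" and fX: "finite X"
  shows "\<not> CL_eq V Ed r s C S (eestar X) (mon [GV v] :: ('v,'e,'k::field) fpoly)"
proof -
  have XC: "X \<in> C" using X by (simp add: Cv_def)
  interpret CL_rep V Ed r s C S "enum(X := Suc \<circ> enum X)"
    using CL_rep.CL_rep_shifted[OF CL_rep_enum[OF sg cE S] cE XC XS] .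
  show ?thesis
    using fX by (intro not_CL_eq_if_rep_entry_differs[where x = "(v, 0)" and y = "(v, 0)"])
      (auto simp: finite_supp_eestar rep_entry_eestar[OF X] rep_entry_mon act_GV)
qed

lemma CL_eestar_neq_eestar:
  assumes sg: "separated_graph V Ed r s C" and cE: "countable Ed" and S: "S \<subseteq> Cfin C"
    and X: "X \<in> C - S" and Y: "Y \<in> C - S" and fX: "finite X" and fY: "finite Y" and XY: "X \<noteq> Y"
  shows "\<not> CL_eq V Ed r s C S (eestar X) (eestar Y :: ('v,'e,'k::field) fpoly)"
proof -
  obtain e f where e: "e \<in> X" and f: "f \<in> Y"
    using X Y separated_graph_classD(1)[OF sg] by blast
  have XCv: "X \<in> Cv s C (s e)" and YCv: "Y \<in> Cv s C (s f)"
    using X Y e f separated_graph_class_Cv[OF sg] by auto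
  define \<phi> where "\<phi> = enum(X := pinned_enum X e, Y := Suc \<circ> enum Y)"
  interpret CL_rep V Ed r s C S \<phi>
    unfolding \<phi>_def
    by (rule CL_rep.CL_rep_shifted[OF CL_rep.CL_rep_pinned[OF CL_rep_enum[OF sg cE S]]])
      (use cE X Y e in auto)
  have "\<phi> X (e, 0) = 0" using XY by (simp add: \<phi>_def)
  then have "0 \<in> \<phi> X ` (X \<times> UNIV)" using e by (metis SigmaI UNIV_I image_eqI)
  moreover have "0 \<notin> \<phi> Y ` (Y \<times> UNIV)" by (auto simp: \<phi>_def)
  ultimately show ?thesis
    using fX fY
    by (intro not_CL_eq_if_rep_entry_differs[where x = "(s e, 0)" and y = "(s e, 0)"])
      (auto simp: finite_supp_eestar rep_entry_eestar[OF XCv] rep_entry_eestar[OF YCv])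
qed

theorem corollary3p5:
  fixes V :: "'v set" and Ed :: "'e set" and r s :: "'e \<Rightarrow> 'v" and C S :: "'e set set"
  assumes sg: "separated_graph V Ed r s C"
    and cV: "countable V" and cE: "countable Ed"
    and S: "S \<subseteq> Cfin C"
  shows
    "(\<forall>e\<in>Ed. \<not> CL_eq V Ed r s C S (mon [GE e]) (pzero :: ('v,'e,'k::field) fpoly))
   \<and> (\<forall>v\<in>V. \<not> CL_eq V Ed r s C S (mon [GV v]) (pzero :: ('v,'e,'k) fpoly))
   \<and> (\<forall>v\<in>V. \<forall>X\<in>Cv s C v. \<forall>Y\<in>Cv s C v. X \<noteq> Y \<longrightarrow> (\<forall>e\<in>X. \<forall>f\<in>Y.
        \<not> CL_eq V Ed r s C S (mon [GS e, GE f]) (pzero :: ('v,'e,'k) fpoly)))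
   \<and> (\<forall>v\<in>V. \<forall>X\<in>Cv s C v - S. finite X \<longrightarrow>
        CL_eq V Ed r s C S (pmul (eestar X) (mon [GV v])) (eestar X :: ('v,'e,'k) fpoly)
      \<and> CL_eq V Ed r s C S (eestar X) (pmul (mon [GV v]) (eestar X) :: ('v,'e,'k) fpoly)
      \<and> \<not> CL_eq V Ed r s C S (eestar X) (mon [GV v] :: ('v,'e,'k) fpoly))
   \<and> (\<forall>X\<in>C - S. \<forall>Y\<in>C - S. finite X \<longrightarrow> finite Y \<longrightarrow> X \<noteq> Y \<longrightarrow>
        \<not> CL_eq V Ed r s C S (eestar X) (eestar Y :: ('v,'e,'k) fpoly))"
proof (intro conjI ballI impI allI)
  fix v X assume X: "X \<in> Cv s C v - S" and fX: "finite X"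
  show "CL_eq V Ed r s C S (pmul (eestar X) (mon [GV v])) (eestar X :: ('v,'e,'k) fpoly)"
    and "CL_eq V Ed r s C S (eestar X) (pmul (mon [GV v]) (eestar X) :: ('v,'e,'k) fpoly)"
    using CL_eq_eestar_vertex[OF sg _ fX] X by blast+
  show "\<not> CL_eq V Ed r s C S (eestar X) (mon [GV v] :: ('v,'e,'k) fpoly)"
    using CL_eestar_neq_vertex[OF sg cE S _ _ fX] X by blast
qed (use CL_edge_nonzero[OF sg cE S] CL_vertex_nonzero[OF sg cE S]
      CL_ghost_edge_nonzero[OF sg cE S] CL_eestar_neq_eestar[OF sg cE S] in blast)+

end
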